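(* Let $\alpha\ge\tfrac12$. There is a constant $C>0$ depending only on $\alpha$ such that for every $f\in(L^\infty,\ell^1)(\mathbb{R}_+,*_\alpha)$ and every $y\in\mathbb{R}_+$, $\|\tau_yf\|_{\infty,1}\le C\,\|f\|_{\infty,1}.$
   Context: Fix $\alpha\geq\tfrac12$. The Bessel–Kingman hypergroup is $(\mathbb{R}_+,*_\alpha)$ with Haar measure $\omega_\alpha(dz)=z^{2\alpha+1}dz$ and, for $x,y>0$, $\varepsilon_x*_\alpha\varepsilon_y(f)=\int_{|x-y|}^{x+y}K_\alpha(x,y,z)f(z)z^{2\alpha+1}dz$ with $K_\alpha(x,y,z)=C_\Gamma\frac{[(z^2-(x-y)^2)((x+y)^2-z^2)]^{\alpha-1/2}}{(xyz)^{2\alpha}}$, $C_\Gamma=\frac{\Gamma(\alpha+1)}{\Gamma(1/2)\Gamma(\alpha+1/2)2^{2\alpha-1}}$; $\varepsilon_0$ is the identity. Translation: $\tau_yf(x)=\varepsilon_x*_\alpha\varepsilon_y(f)$. Let $I_n=[n-1,n)$, $\omega_n=\omega_\alpha(I_n)$, $\|f\|_{\infty,1}=\sum_{n\ge1}\omega_n\sup_{x\in I_n}|f(x)|$, and $(L^\infty,\ell^1)(\mathbb{R}_+,*_\alpha)=\{f \text{ measurable}:\|f\|_{\infty,1}<\infty\}$. *)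

theory Defs
  imports "HOL-Analysis.Analysis"
begin

definition CGamma :: "real \<Rightarrow> real" where
  "CGamma \<alpha> = Gamma (\<alpha> + 1) / (Gamma (1/2) * Gamma (\<alpha> + 1/2) * 2 powr (2*\<alpha> - 1))"

definition BK_kernel :: "real \<Rightarrow> real \<Rightarrow> real \<Rightarrow> real \<Rightarrow> real" where
  "BK_kernel \<alpha> x y z =
     CGamma \<alpha> * ((z\<^sup>2 - (x - y)\<^sup>2) * ((x + y)\<^sup>2 - z\<^sup>2)) powr (\<alpha> - 1/2)
       / (x * y * z) powr (2 * \<alpha>)"

text \<open>Generalized translation tau_y f (x) = (eps_x *_alpha eps_y)(f), for x, y >= 0;
  eps_0 is the identity of the hypergroup.\<close>
definition BK_transl :: "real \<Rightarrow> real \<Rightarrow> (real \<Rightarrow> complex) \<Rightarrow> real \<Rightarrow> complex" where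
  "BK_transl \<alpha> y f x =
     (if x = 0 then f y
      else if y = 0 then f x
      else (LBINT z=\<bar>x - y\<bar>..x + y.
              complex_of_real (BK_kernel \<alpha> x y z * z powr (2 * \<alpha> + 1)) * f z))"

text \<open>omega_n = Haar measure of I_n = [n-1, n), indexed here by n = Suc k.\<close>
definition BK_omega :: "real \<Rightarrow> nat \<Rightarrow> real" where
  "BK_omega \<alpha> n = (LBINT z=real n - 1..real n. z powr (2 * \<alpha> + 1))"

definition BK_norm :: "real \<Rightarrow> (real \<Rightarrow> complex) \<Rightarrow> ennreal" where
  "BK_norm \<alpha> f = (\<Sum>k. ennreal (BK_omega \<alpha> (Suc k)) *
       (SUP x\<in>{real (Suc k) - 1..<real (Suc k)}. ennreal (cmod (f x))))"

end

theory Submission imports Defs begin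

text \<open>The translate \<open>\<tau>\<^sub>y f(x)\<close> integrates \<open>f\<close> against \<open>\<epsilon>\<^sub>x * \<epsilon>\<^sub>y\<close>, a measure carried by
  \<open>[\<bar>x - y\<bar>, x + y]\<close>. Bounding \<open>\<bar>f\<bar>\<close> on each cell \<open>I\<^sub>k\<close> by its supremum \<open>s\<^sub>k\<close> gives
  \<open>sup (\<bar>\<tau>\<^sub>y f\<bar> on I\<^sub>n) \<le> \<Sum>\<^sub>k s\<^sub>k \<cdot> sup (\<nu>\<^sub>k on I\<^sub>n)\<close>, where \<open>\<nu>\<^sub>k(x)\<close> is the mass of \<open>\<epsilon>\<^sub>x * \<epsilon>\<^sub>y\<close>
  on \<open>I\<^sub>k\<close>; after exchanging the sums it suffices that \<open>\<Sum>\<^sub>n \<omega>\<^sub>n \<cdot> sup (\<nu>\<^sub>k on I\<^sub>n) \<le> C \<omega>\<^sub>k\<close>.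
  The density of \<open>\<epsilon>\<^sub>x * \<epsilon>\<^sub>y\<close> is at most a constant times both \<open>z / (x y)\<close> and
  \<open>z^(2\<alpha>) / (x y)^(\<alpha> + 1/2)\<close>; a case analysis on the relative sizes of \<open>x\<close>, \<open>y\<close> and \<open>k\<close>
  turns this into \<open>\<omega>\<^sub>n \<nu>\<^sub>k(x) \<le> c \<cdot> k^(2\<alpha> + 1) / max 1 (min y k)\<close>. Moreover \<open>\<nu>\<^sub>k\<close> vanishes
  on \<open>I\<^sub>n\<close> except for at most \<open>5 max 1 (min y k)\<close> values of \<open>n\<close>, and \<open>\<omega>\<^sub>k \<ge> 2^(-2\<alpha>-2) k^(2\<alpha> + 1)\<close>.\<close>

definition BK_density :: "real \<Rightarrow> real \<Rightarrow> real \<Rightarrow> real \<Rightarrow> real" where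
  "BK_density \<alpha> x y z = BK_kernel \<alpha> x y z * z powr (2 * \<alpha> + 1)"

lemma CGamma_nonneg: "\<alpha> \<ge> 1/2 \<Longrightarrow> CGamma \<alpha> \<ge> 0"
  unfolding CGamma_def by (intro divide_nonneg_pos mult_pos_pos) auto

lemma BK_density_nonneg: "\<alpha> \<ge> 1/2 \<Longrightarrow> BK_density \<alpha> x y z \<ge> 0"
  unfolding BK_density_def BK_kernel_def using CGamma_nonneg by simp

lemma BK_density_measurable [measurable]: "BK_density \<alpha> x y \<in> borel_measurable borel"
  unfolding BK_density_def BK_kernel_def by measurable

lemma BK_density_eq:
  assumes "x > 0" "y > 0" "z > 0"
  shows "BK_density \<alpha> x y z =
    CGamma \<alpha> * ((z\<^sup>2 - (x - y)\<^sup>2) * ((x + y)\<^sup>2 - z\<^sup>2)) powr (\<alpha> - 1/2) * z / (x * y) powr (2 * \<alpha>)"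
proof -
  have "(x * y * z) powr (2 * \<alpha>) = (x * y) powr (2 * \<alpha>) * z powr (2 * \<alpha>)"
    using assms by (simp add: powr_mult)
  moreover have "z powr (2 * \<alpha> + 1) = z powr (2 * \<alpha>) * z"
    using assms by (simp add: powr_add)
  moreover have "z powr (2 * \<alpha>) > 0" using assms by simp
  ultimately show ?thesis unfolding BK_density_def BK_kernel_def by (simp add: field_simps)
qed

lemma kernel_factor_bounds:
  fixes x y z :: real
  assumes "x > 0" "y > 0" "\<bar>x - y\<bar> < z" "z < x + y"
  shows "0 \<le> z\<^sup>2 - (x - y)\<^sup>2" "z\<^sup>2 - (x - y)\<^sup>2 \<le> 4 * x * y" "z\<^sup>2 - (x - y)\<^sup>2 \<le> z\<^sup>2"
    and "0 \<le> (x + y)\<^sup>2 - z\<^sup>2" "(x + y)\<^sup>2 - z\<^sup>2 \<le> 4 * x * y"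
proof -
  have z: "z > 0" using assms abs_ge_zero[of "x - y"] by linarith
  have "(x - y)\<^sup>2 = \<bar>x - y\<bar>\<^sup>2" by simp
  also have "\<dots> \<le> z\<^sup>2" using assms by (intro power_mono) auto
  finally show lower: "0 \<le> z\<^sup>2 - (x - y)\<^sup>2" by simp
  have "z\<^sup>2 \<le> (x + y)\<^sup>2" using assms z by (intro power_mono) auto
  then show "z\<^sup>2 - (x - y)\<^sup>2 \<le> 4 * x * y" "0 \<le> (x + y)\<^sup>2 - z\<^sup>2"
    by (auto simp: power2_eq_square algebra_simps)
  show "z\<^sup>2 - (x - y)\<^sup>2 \<le> z\<^sup>2" by simp
  show "(x + y)\<^sup>2 - z\<^sup>2 \<le> 4 * x * y"
    using lower by (auto simp: power2_eq_square algebra_simps)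
qed

definition BK_lin_const :: "real \<Rightarrow> real" where
  "BK_lin_const \<alpha> = CGamma \<alpha> * 4 powr (2 * \<alpha> - 1)"

definition BK_pow_const :: "real \<Rightarrow> real" where
  "BK_pow_const \<alpha> = CGamma \<alpha> * 4 powr (\<alpha> - 1/2)"

lemma BK_lin_const_nonneg: "\<alpha> \<ge> 1/2 \<Longrightarrow> BK_lin_const \<alpha> \<ge> 0"
  and BK_pow_const_nonneg: "\<alpha> \<ge> 1/2 \<Longrightarrow> BK_pow_const \<alpha> \<ge> 0"
  unfolding BK_lin_const_def BK_pow_const_def using CGamma_nonneg by auto

lemma BK_density_le_linear:
  assumes a: "\<alpha> \<ge> 1/2" and xyz: "x > 0" "y > 0" "\<bar>x - y\<bar> < z" "z < x + y"
  shows "BK_density \<alpha> x y z \<le> BK_lin_const \<alpha> * z / (x * y)"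
proof -
  note b = kernel_factor_bounds[OF xyz]
  have z: "z > 0" using xyz abs_ge_zero[of "x - y"] by linarith
  define br where "br = (z\<^sup>2 - (x - y)\<^sup>2) * ((x + y)\<^sup>2 - z\<^sup>2)"
  have "br \<le> (4 * x * y) * (4 * x * y)" unfolding br_def using b xyz by (intro mult_mono) auto
  then have "br powr (\<alpha> - 1/2) \<le> ((4 * x * y) * (4 * x * y)) powr (\<alpha> - 1/2)"
    using b a unfolding br_def by (intro powr_mono2) auto
  also have "\<dots> = (4 * x * y) powr (\<alpha> - 1/2) * (4 * x * y) powr (\<alpha> - 1/2)"
    using xyz by (intro powr_mult)
  also have "\<dots> = (4 * x * y) powr (2 * \<alpha> - 1)"
    by (simp add: powr_add[symmetric])
  also have "\<dots> = 4 powr (2 * \<alpha> - 1) * (x * y) powr (2 * \<alpha>) / (x * y)"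
    using xyz by (simp add: powr_mult powr_diff mult.assoc)
  finally have br: "br powr (\<alpha> - 1/2) \<le> 4 powr (2 * \<alpha> - 1) * (x * y) powr (2 * \<alpha>) / (x * y)" .
  have "BK_density \<alpha> x y z = CGamma \<alpha> * br powr (\<alpha> - 1/2) * z / (x * y) powr (2 * \<alpha>)"
    unfolding br_def using xyz z by (simp add: BK_density_eq)
  also have "\<dots> \<le> CGamma \<alpha> * (4 powr (2 * \<alpha> - 1) * (x * y) powr (2 * \<alpha>) / (x * y)) * z / (x * y) powr (2 * \<alpha>)"
    using br z CGamma_nonneg[OF a] xyz
    by (intro divide_right_mono mult_right_mono mult_left_mono) auto
  also have "\<dots> = BK_lin_const \<alpha> * z / (x * y)"
    using xyz by (simp add: BK_lin_const_def)
  finally show ?thesis .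
qed

lemma BK_density_le_power:
  assumes a: "\<alpha> \<ge> 1/2" and xyz: "x > 0" "y > 0" "\<bar>x - y\<bar> < z" "z < x + y"
  shows "BK_density \<alpha> x y z \<le> BK_pow_const \<alpha> * z powr (2 * \<alpha>) / (x * y) powr (\<alpha> + 1/2)"
proof -
  note b = kernel_factor_bounds[OF xyz]
  have z: "z > 0" using xyz abs_ge_zero[of "x - y"] by linarith
  define br where "br = (z\<^sup>2 - (x - y)\<^sup>2) * ((x + y)\<^sup>2 - z\<^sup>2)"
  have "br \<le> z\<^sup>2 * (4 * (x * y))" unfolding br_def using b xyz by (intro mult_mono) auto
  then have "br powr (\<alpha> - 1/2) \<le> (z\<^sup>2 * (4 * (x * y))) powr (\<alpha> - 1/2)"
    using b a unfolding br_def by (intro powr_mono2) auto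
  also have "\<dots> = (z\<^sup>2) powr (\<alpha> - 1/2) * 4 powr (\<alpha> - 1/2) * (x * y) powr (\<alpha> - 1/2)"
    using xyz by (simp add: powr_mult)
  also have "(z\<^sup>2) powr (\<alpha> - 1/2) = z powr (2 * \<alpha> - 1)"
    using z by (simp add: powr_powr flip: powr_numeral)
  finally have br: "br powr (\<alpha> - 1/2) \<le> z powr (2 * \<alpha> - 1) * 4 powr (\<alpha> - 1/2) * (x * y) powr (\<alpha> - 1/2)" .
  have "BK_density \<alpha> x y z = CGamma \<alpha> * br powr (\<alpha> - 1/2) * z / (x * y) powr (2 * \<alpha>)"
    unfolding br_def using xyz z by (simp add: BK_density_eq)
  also have "\<dots> \<le> CGamma \<alpha> * (z powr (2 * \<alpha> - 1) * 4 powr (\<alpha> - 1/2) * (x * y) powr (\<alpha> - 1/2)) * z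
      / (x * y) powr (2 * \<alpha>)"
    using br z CGamma_nonneg[OF a] xyz
    by (intro divide_right_mono mult_right_mono mult_left_mono) auto
  also have "\<dots> = BK_pow_const \<alpha> * (z powr (2 * \<alpha> - 1) * z)
      * ((x * y) powr (\<alpha> - 1/2) / (x * y) powr (2 * \<alpha>))"
    by (simp add: BK_pow_const_def)
  also have "z powr (2 * \<alpha> - 1) * z = z powr (2 * \<alpha>)"
    using z by (simp add: powr_diff)
  also have "(x * y) powr (\<alpha> - 1/2) / (x * y) powr (2 * \<alpha>) = 1 / (x * y) powr (\<alpha> + 1/2)"
    using xyz by (simp add: powr_diff[symmetric] powr_minus_divide[symmetric] algebra_simps)
  finally show ?thesis by simp
qed

text \<open>\<open>BK_mass \<alpha> x y m\<close> is the mass of \<open>\<epsilon>\<^sub>x * \<epsilon>\<^sub>y\<close> on the cell \<open>[m - 1, m)\<close>; for \<open>x = 0\<close> the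
  measure is the point mass at \<open>y\<close>.\<close>

definition BK_mass :: "real \<Rightarrow> real \<Rightarrow> real \<Rightarrow> nat \<Rightarrow> ennreal" where
  "BK_mass \<alpha> x y m =
     (if x = 0 then ennreal (indicator {real m - 1..<real m} y)
      else \<integral>\<^sup>+z. ennreal (indicator ({\<bar>x - y\<bar><..<x + y} \<inter> {real m - 1..<real m}) z * BK_density \<alpha> x y z) \<partial>lborel)"

lemma BK_mass_eq_nn_integral:
  "x \<noteq> 0 \<Longrightarrow> BK_mass \<alpha> x y m =
    (\<integral>\<^sup>+z. ennreal (indicator ({\<bar>x - y\<bar><..<x + y} \<inter> {real m - 1..<real m}) z * BK_density \<alpha> x y z) \<partial>lborel)"
  unfolding BK_mass_def by simp

lemma nn_integral_indicator_le_const: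
  fixes g :: "real \<Rightarrow> real"
  assumes "S \<subseteq> {a..b}" "a \<le> b" "\<And>z. z \<in> S \<Longrightarrow> g z \<le> M"
  shows "(\<integral>\<^sup>+z. ennreal (indicator S z * g z) \<partial>lborel) \<le> ennreal (M * (b - a))"
proof -
  have "(\<integral>\<^sup>+z. ennreal (indicator S z * g z) \<partial>lborel) \<le> (\<integral>\<^sup>+z. ennreal M * indicator {a..b} z \<partial>lborel)"
    using assms by (intro nn_integral_mono) (auto split: split_indicator simp: ennreal_leI)
  also have "\<dots> = ennreal M * ennreal (b - a)"
    using assms by (subst nn_integral_cmult_indicator) auto
  also have "\<dots> \<le> ennreal (M * (b - a))"
    by (cases "M \<ge> 0") (auto simp: ennreal_mult' ennreal_neg)
  finally show ?thesis .
qed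

lemma BK_mass_eq_0:
  assumes "x > 0" "\<not> (\<bar>x - y\<bar> < real m \<and> real m - 1 < x + y)"
  shows "BK_mass \<alpha> x y m = 0"
proof -
  have "{\<bar>x - y\<bar><..<x + y} \<inter> {real m - 1..<real m} = {}" using assms by auto
  then show ?thesis using assms unfolding BK_mass_def by simp
qed

lemma BK_mass_le_const:
  assumes a: "\<alpha> \<ge> 1/2" and xy: "x > 0" "y > 0"
  shows "BK_mass \<alpha> x y m \<le> ennreal (4 * BK_lin_const \<alpha>)"
proof -
  define c where "c = BK_lin_const \<alpha>"
  have c: "c \<ge> 0" unfolding c_def using BK_lin_const_nonneg[OF a] .
  have "BK_mass \<alpha> x y m \<le> ennreal (c * (x + y) / (x * y) * ((x + y) - \<bar>x - y\<bar>))"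
    unfolding BK_mass_eq_nn_integral[OF xy(1)[THEN less_imp_neq, symmetric]]
  proof (rule nn_integral_indicator_le_const)
    fix z assume z: "z \<in> {\<bar>x - y\<bar><..<x + y} \<inter> {real m - 1..<real m}"
    then have "BK_density \<alpha> x y z \<le> c * z / (x * y)"
      unfolding c_def using a xy by (intro BK_density_le_linear) auto
    also have "\<dots> \<le> c * (x + y) / (x * y)"
      using z xy c by (intro divide_right_mono mult_left_mono) auto
    finally show "BK_density \<alpha> x y z \<le> c * (x + y) / (x * y)" .
  qed (use xy in auto)
  also have "c * (x + y) / (x * y) * ((x + y) - \<bar>x - y\<bar>) \<le> 4 * c"
  proof -
    have "(x + y) * ((x + y) - \<bar>x - y\<bar>) = 2 * (x + y) * min x y"
      by (simp add: abs_if min_def algebra_simps)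
    also have "\<dots> \<le> 4 * (x * y)"
      using xy by (cases "x \<le> y") (auto simp: min_def algebra_simps intro: mult_left_mono mult_right_mono)
    finally have "(x + y) * ((x + y) - \<bar>x - y\<bar>) / (x * y) \<le> 4"
      using xy by (simp add: divide_le_eq)
    then have "c * ((x + y) * ((x + y) - \<bar>x - y\<bar>) / (x * y)) \<le> c * 4"
      using c by (rule mult_left_mono)
    then show ?thesis by (simp add: algebra_simps)
  qed
  finally show ?thesis unfolding c_def by (simp add: ennreal_leI)
qed

lemma BK_mass_le_linear:
  assumes a: "\<alpha> \<ge> 1/2" and xy: "x > 0" "y > 0" and m: "m \<ge> 1"
  shows "BK_mass \<alpha> x y m \<le> ennreal (BK_lin_const \<alpha> * real m / (x * y))"
proof -
  have "BK_mass \<alpha> x y m \<le> ennreal (BK_lin_const \<alpha> * real m / (x * y) * (real m - (real m - 1)))"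
    unfolding BK_mass_eq_nn_integral[OF xy(1)[THEN less_imp_neq, symmetric]]
  proof (rule nn_integral_indicator_le_const)
    fix z assume z: "z \<in> {\<bar>x - y\<bar><..<x + y} \<inter> {real m - 1..<real m}"
    then have "BK_density \<alpha> x y z \<le> BK_lin_const \<alpha> * z / (x * y)"
      using a xy by (intro BK_density_le_linear) auto
    also have "\<dots> \<le> BK_lin_const \<alpha> * real m / (x * y)"
      using z xy BK_lin_const_nonneg[OF a] by (intro divide_right_mono mult_left_mono) auto
    finally show "BK_density \<alpha> x y z \<le> BK_lin_const \<alpha> * real m / (x * y)" .
  qed auto
  then show ?thesis by simp
qed

lemma BK_mass_le_power:
  assumes a: "\<alpha> \<ge> 1/2" and xy: "x > 0" "y > 0" and m: "m \<ge> 1"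
  shows "BK_mass \<alpha> x y m \<le> ennreal (BK_pow_const \<alpha> * real m powr (2 * \<alpha>) / (x * y) powr (\<alpha> + 1/2))"
proof -
  let ?B = "BK_pow_const \<alpha> * real m powr (2 * \<alpha>) / (x * y) powr (\<alpha> + 1/2)"
  have "BK_mass \<alpha> x y m \<le> ennreal (?B * (real m - (real m - 1)))"
    unfolding BK_mass_eq_nn_integral[OF xy(1)[THEN less_imp_neq, symmetric]]
  proof (rule nn_integral_indicator_le_const)
    fix z assume z: "z \<in> {\<bar>x - y\<bar><..<x + y} \<inter> {real m - 1..<real m}"
    then have z0: "z > 0" using abs_ge_zero[of "x - y"] by auto
    from z have "BK_density \<alpha> x y z \<le> BK_pow_const \<alpha> * z powr (2 * \<alpha>) / (x * y) powr (\<alpha> + 1/2)"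
      using a xy by (intro BK_density_le_power) auto
    also have "\<dots> \<le> ?B"
      using z z0 xy a BK_pow_const_nonneg[OF a] by (intro divide_right_mono mult_left_mono powr_mono2) auto
    finally show "BK_density \<alpha> x y z \<le> ?B" .
  qed auto
  then show ?thesis by simp
qed

lemma BK_omega_eq_nn_integral:
  assumes "e > 0" "N \<ge> 1"
  shows "ennreal (LBINT z=real N - 1..real N. z powr e) =
    (\<integral>\<^sup>+z. ennreal (indicator {real N - 1<..<real N} z * z powr e) \<partial>lborel)"
proof -
  have "set_integrable lborel {real N - 1..real N} (\<lambda>z. z powr e)"
    using assms by (intro borel_integrable_atLeastAtMost' continuous_on_powr')
      (auto intro!: continuous_intros)
  then have int: "set_integrable lborel {real N - 1<..<real N} (\<lambda>z. z powr e)"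
    by (rule set_integrable_subset) auto
  have "(LBINT z=real N - 1..real N. z powr e) =
      (LINT z|lborel. indicator {real N - 1<..<real N} z * z powr e)"
    by (simp add: interval_lebesgue_integral_le_eq set_lebesgue_integral_def)
  also have "ennreal \<dots> = (\<integral>\<^sup>+z. ennreal (indicator {real N - 1<..<real N} z * z powr e) \<partial>lborel)"
    using int unfolding set_integrable_def
    by (intro nn_integral_eq_integral[symmetric]) (auto split: split_indicator)
  finally show ?thesis by simp
qed

lemma BK_omega_le:
  assumes "\<alpha> \<ge> 1/2" "N \<ge> 1"
  shows "BK_omega \<alpha> N \<le> real N powr (2 * \<alpha> + 1)"
proof -
  have "ennreal (BK_omega \<alpha> N) =
      (\<integral>\<^sup>+z. ennreal (indicator {real N - 1<..<real N} z * z powr (2 * \<alpha> + 1)) \<partial>lborel)"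
    unfolding BK_omega_def using assms by (intro BK_omega_eq_nn_integral) auto
  also have "\<dots> \<le> ennreal (real N powr (2 * \<alpha> + 1) * (real N - (real N - 1)))"
    using assms by (intro nn_integral_indicator_le_const) (auto intro!: powr_mono2)
  finally show ?thesis by (subst (asm) ennreal_le_iff) auto
qed

lemma BK_omega_ge:
  assumes "\<alpha> \<ge> 1/2" "N \<ge> 1"
  shows "(real N / 2) powr (2 * \<alpha> + 1) / 2 \<le> BK_omega \<alpha> N"
proof -
  let ?c = "(real N / 2) powr (2 * \<alpha> + 1)"
  have "ennreal (?c / 2) = (\<integral>\<^sup>+z. ennreal ?c * indicator {real N - 1/2..real N} z \<partial>lborel)"
    by (subst nn_integral_cmult_indicator)
      (simp_all add: divide_ennreal_def[symmetric] ennreal_divide_numeral)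
  also have "\<dots> \<le> (\<integral>\<^sup>+z. ennreal (indicator {real N - 1<..<real N} z * z powr (2 * \<alpha> + 1)) \<partial>lborel)"
  proof (rule nn_integral_mono_AE)
    show "AE z in lborel. ennreal ?c * indicator {real N - 1/2..real N} z
        \<le> ennreal (indicator {real N - 1<..<real N} z * z powr (2 * \<alpha> + 1))"
      using AE_lborel_singleton[of "real N"]
    proof eventually_elim
      case (elim z)
      show ?case
      proof (cases "z \<in> {real N - 1/2..real N}")
        case True
        then have "?c \<le> z powr (2 * \<alpha> + 1)" using assms by (intro powr_mono2) auto
        then show ?thesis using True elim by (auto simp: ennreal_leI)
      qed simp
    qed
  qed
  also have "\<dots> = ennreal (BK_omega \<alpha> N)"
    unfolding BK_omega_def using assms by (intro BK_omega_eq_nn_integral[symmetric]) auto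
  finally have "ennreal (?c / 2) \<le> ennreal (BK_omega \<alpha> N)" .
  moreover have "?c / 2 > 0" using assms by auto
  ultimately show ?thesis by (metis ennreal_le_iff2 less_le_not_le)
qed

lemma BK_omega_nonneg: "\<alpha> \<ge> 1/2 \<Longrightarrow> N \<ge> 1 \<Longrightarrow> BK_omega \<alpha> N \<ge> 0"
  by (rule order.trans[OF _ BK_omega_ge]) auto

text \<open>One summand for each case of the bound on \<open>\<omega>\<^sub>N \<cdot> BK_mass \<alpha> x y m\<close> below.\<close>

definition BK_cell_const :: "real \<Rightarrow> real" where
  "BK_cell_const \<alpha> = 1 + 4 * BK_lin_const \<alpha> + 4 * BK_lin_const \<alpha> * 3 powr (2 * \<alpha> + 1)
     + 2 powr (2 * \<alpha> + 1) * BK_pow_const \<alpha> * 2 powr (\<alpha> + 1/2)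
     + 2 powr (2 * \<alpha> + 1) * 2 powr (2 * \<alpha>) * BK_lin_const \<alpha>"

definition BK_cell_bound :: "real \<Rightarrow> real \<Rightarrow> nat \<Rightarrow> real" where
  "BK_cell_bound \<alpha> y m = BK_cell_const \<alpha> * real m powr (2 * \<alpha> + 1) / max 1 (min y (real m))"

lemma BK_cell_const_ge:
  assumes "\<alpha> \<ge> 1/2"
  shows "1 \<le> BK_cell_const \<alpha>" "4 * BK_lin_const \<alpha> \<le> BK_cell_const \<alpha>"
    "4 * BK_lin_const \<alpha> * 3 powr (2 * \<alpha> + 1) \<le> BK_cell_const \<alpha>"
    "2 powr (2 * \<alpha> + 1) * BK_pow_const \<alpha> * 2 powr (\<alpha> + 1/2) \<le> BK_cell_const \<alpha>"
    "2 powr (2 * \<alpha> + 1) * 2 powr (2 * \<alpha>) * BK_lin_const \<alpha> \<le> BK_cell_const \<alpha>"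
proof -
  have "0 \<le> BK_lin_const \<alpha>" "0 \<le> BK_pow_const \<alpha>"
    using BK_lin_const_nonneg BK_pow_const_nonneg assms by auto
  then have "0 \<le> 4 * BK_lin_const \<alpha>" "0 \<le> 4 * BK_lin_const \<alpha> * 3 powr (2 * \<alpha> + 1)"
    "0 \<le> 2 powr (2 * \<alpha> + 1) * BK_pow_const \<alpha> * 2 powr (\<alpha> + 1/2)"
    "0 \<le> 2 powr (2 * \<alpha> + 1) * 2 powr (2 * \<alpha>) * BK_lin_const \<alpha>" by auto
  then show "1 \<le> BK_cell_const \<alpha>" "4 * BK_lin_const \<alpha> \<le> BK_cell_const \<alpha>"
    "4 * BK_lin_const \<alpha> * 3 powr (2 * \<alpha> + 1) \<le> BK_cell_const \<alpha>"
    "2 powr (2 * \<alpha> + 1) * BK_pow_const \<alpha> * 2 powr (\<alpha> + 1/2) \<le> BK_cell_const \<alpha>"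
    "2 powr (2 * \<alpha> + 1) * 2 powr (2 * \<alpha>) * BK_lin_const \<alpha> \<le> BK_cell_const \<alpha>"
    unfolding BK_cell_const_def by linarith+
qed

lemma BK_cell_bound_nonneg: "\<alpha> \<ge> 1/2 \<Longrightarrow> 0 \<le> BK_cell_bound \<alpha> y m"
  unfolding BK_cell_bound_def using BK_cell_const_ge(1)[of \<alpha>] by auto

lemma BK_cell_const_le_cell_bound:
  assumes a: "\<alpha> \<ge> 1/2" and m: "m \<ge> 1"
  shows "BK_cell_const \<alpha> \<le> BK_cell_bound \<alpha> y m"
proof -
  have "max 1 (min y (real m)) \<le> real m powr 1" using m by auto
  also have "\<dots> \<le> real m powr (2 * \<alpha> + 1)" using m a by (intro powr_mono) auto
  finally have "1 \<le> real m powr (2 * \<alpha> + 1) / max 1 (min y (real m))" by (simp add: le_divide_eq)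
  from mult_left_mono[OF this, of "BK_cell_const \<alpha>"] show ?thesis
    using BK_cell_const_ge(1)[OF a] unfolding BK_cell_bound_def by simp
qed

lemma ennreal_mult_le_ennrealI:
  fixes w W B P :: real and v :: ennreal
  assumes "0 \<le> w" "w \<le> W" "v \<le> ennreal B" "0 \<le> B" "W * B \<le> P"
  shows "ennreal w * v \<le> ennreal P"
proof -
  have "ennreal w * v \<le> ennreal w * ennreal B" using assms by (intro mult_left_mono) auto
  also have "\<dots> = ennreal (w * B)" using assms by (simp add: ennreal_mult)
  also have "w * B \<le> P" using assms mult_right_mono[of w W B] by linarith
  then have "ennreal (w * B) \<le> ennreal P" by (rule ennreal_leI)
  finally show ?thesis .
qed

lemma BK_mass_le_cell_const:
  assumes a: "\<alpha> \<ge> 1/2" and xy: "x \<ge> 0" "y > 0"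
  shows "BK_mass \<alpha> x y m \<le> ennreal (BK_cell_const \<alpha>)"
proof (cases "x = 0")
  case True
  then have "BK_mass \<alpha> x y m \<le> ennreal 1" unfolding BK_mass_def by (simp add: indicator_def)
  then show ?thesis using BK_cell_const_ge(1)[OF a] by (meson ennreal_leI order.trans)
next
  case False
  then have "BK_mass \<alpha> x y m \<le> ennreal (4 * BK_lin_const \<alpha>)"
    using BK_mass_le_const[OF a _ xy(2)] xy(1) by simp
  then show ?thesis using BK_cell_const_ge(2)[OF a] by (meson ennreal_leI order.trans)
qed

lemma omega_mass_le_first_cell:
  assumes a: "\<alpha> \<ge> 1/2" and xy: "x \<ge> 0" "y > 0" and m: "m \<ge> 1"
  shows "ennreal (BK_omega \<alpha> 1) * BK_mass \<alpha> x y m \<le> ennreal (BK_cell_bound \<alpha> y m)"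
  using BK_omega_nonneg[OF a] BK_omega_le[OF a, of 1] BK_mass_le_cell_const[OF a xy]
    BK_cell_const_ge(1)[OF a] BK_cell_const_le_cell_bound[OF a m]
  by (intro ennreal_mult_le_ennrealI[where W = 1]) auto

lemma omega_mass_le_small_shift:
  assumes a: "\<alpha> \<ge> 1/2" and xy: "x > 0" "y > 0" "y \<le> 1" "x - y < real m"
    and N: "N \<ge> 1" "real N \<le> x + 1" and m: "m \<ge> 1"
  shows "ennreal (BK_omega \<alpha> N) * BK_mass \<alpha> x y m \<le> ennreal (BK_cell_bound \<alpha> y m)"
proof (rule ennreal_mult_le_ennrealI)
  have "real N \<le> 3 * real m" using xy N m by linarith
  then have "real N powr (2 * \<alpha> + 1) \<le> (3 * real m) powr (2 * \<alpha> + 1)"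
    using N a by (intro powr_mono2) auto
  then show "BK_omega \<alpha> N \<le> 3 powr (2 * \<alpha> + 1) * real m powr (2 * \<alpha> + 1)"
    using BK_omega_le[OF a N(1)] by (simp add: powr_mult)
  have "max 1 (min y (real m)) = 1" using xy m by auto
  then show "3 powr (2 * \<alpha> + 1) * real m powr (2 * \<alpha> + 1) * (4 * BK_lin_const \<alpha>) \<le> BK_cell_bound \<alpha> y m"
    using mult_right_mono[OF BK_cell_const_ge(3)[OF a], of "real m powr (2 * \<alpha> + 1)"]
    unfolding BK_cell_bound_def by (simp add: ac_simps)
qed (use a xy N BK_omega_nonneg BK_mass_le_const BK_lin_const_nonneg in auto)

lemma omega_mass_le_comparable:
  assumes a: "\<alpha> \<ge> 1/2" and xy: "x > 0" "y > 0" "x \<le> 2 * y"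
    and N: "N \<ge> 1" "real N \<le> 2 * x" and m: "m \<ge> 1"
  shows "ennreal (BK_omega \<alpha> N) * BK_mass \<alpha> x y m \<le> ennreal (BK_cell_bound \<alpha> y m)"
proof (rule ennreal_mult_le_ennrealI)
  define \<beta> where "\<beta> = \<alpha> + 1/2"
  define c where "c = BK_pow_const \<alpha>"
  have c: "c \<ge> 0" unfolding c_def using BK_pow_const_nonneg[OF a] .
  show "BK_omega \<alpha> N \<le> (2 * x) powr (2 * \<alpha> + 1)"
    using BK_omega_le[OF a N(1)] powr_mono2[of "2 * \<alpha> + 1" "real N" "2 * x"] N a by linarith
  have "(2 * x) powr (2 * \<alpha> + 1) * (c * real m powr (2 * \<alpha>) / (x * y) powr \<beta>)
      = 2 powr (2 * \<alpha> + 1) * c * real m powr (2 * \<alpha>) * (x / y) powr \<beta>"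
  proof -
    have "(2 * x) powr (2 * \<alpha> + 1) = 2 powr (2 * \<alpha> + 1) * (x powr \<beta> * x powr \<beta>)"
      using xy by (simp add: \<beta>_def powr_mult flip: powr_add)
    moreover have "(x * y) powr \<beta> = x powr \<beta> * y powr \<beta>" "(x / y) powr \<beta> = x powr \<beta> / y powr \<beta>"
      using xy by (simp_all add: powr_mult powr_divide)
    ultimately show ?thesis using xy by (simp add: field_simps)
  qed
  also have "\<dots> \<le> 2 powr (2 * \<alpha> + 1) * c * real m powr (2 * \<alpha>) * 2 powr \<beta>"
    using xy a c by (intro mult_left_mono powr_mono2) (auto simp: \<beta>_def divide_le_eq)
  also have "\<dots> \<le> BK_cell_const \<alpha> * real m powr (2 * \<alpha>)"
    using mult_right_mono[OF BK_cell_const_ge(4)[OF a], of "real m powr (2 * \<alpha>)"]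
    unfolding c_def \<beta>_def by (simp add: ac_simps)
  also have "\<dots> \<le> BK_cell_bound \<alpha> y m"
  proof -
    have D: "max 1 (min y (real m)) \<le> real m" "max 1 (min y (real m)) > 0" using m by auto
    have "BK_cell_const \<alpha> * real m powr (2 * \<alpha>) * max 1 (min y (real m))
        \<le> BK_cell_const \<alpha> * real m powr (2 * \<alpha>) * real m"
      using D BK_cell_const_ge(1)[OF a] by (intro mult_left_mono) auto
    also have "\<dots> = BK_cell_const \<alpha> * real m powr (2 * \<alpha> + 1)" using m by (simp add: powr_add)
    finally show ?thesis unfolding BK_cell_bound_def using D by (simp add: le_divide_eq)
  qed
  finally show "(2 * x) powr (2 * \<alpha> + 1) * (c * real m powr (2 * \<alpha>) / (x * y) powr (\<alpha> + 1/2))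
      \<le> BK_cell_bound \<alpha> y m" unfolding \<beta>_def .
  show "BK_mass \<alpha> x y m \<le> ennreal (c * real m powr (2 * \<alpha>) / (x * y) powr (\<alpha> + 1/2))"
    unfolding c_def by (rule BK_mass_le_power[OF a xy(1,2) m])
qed (use a N BK_omega_nonneg BK_pow_const_nonneg xy in auto)

lemma omega_mass_le_far:
  assumes a: "\<alpha> \<ge> 1/2" and xy: "x > 0" "y > 1" "2 * y < x" "\<bar>x - y\<bar> < real m"
    and N: "N \<ge> 1" "real N \<le> 2 * x" and m: "m \<ge> 1"
  shows "ennreal (BK_omega \<alpha> N) * BK_mass \<alpha> x y m \<le> ennreal (BK_cell_bound \<alpha> y m)"
proof (rule ennreal_mult_le_ennrealI)
  define c where "c = BK_lin_const \<alpha>"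
  have c: "c \<ge> 0" unfolding c_def using BK_lin_const_nonneg[OF a] .
  have xm: "x < 2 * real m" and ym: "y < real m" using xy by auto
  show "BK_omega \<alpha> N \<le> (2 * x) powr (2 * \<alpha> + 1)"
    using BK_omega_le[OF a N(1)] powr_mono2[of "2 * \<alpha> + 1" "real N" "2 * x"] N a by linarith
  have "(2 * x) powr (2 * \<alpha> + 1) * (c * real m / (x * y))
      = 2 powr (2 * \<alpha> + 1) * c * real m * x powr (2 * \<alpha>) / y"
    using xy by (simp add: powr_mult powr_add field_simps)
  also have "\<dots> \<le> 2 powr (2 * \<alpha> + 1) * c * real m * (2 * real m) powr (2 * \<alpha>) / y"
    using a xy xm c by (intro divide_right_mono mult_left_mono powr_mono2) auto
  also have "\<dots> = 2 powr (2 * \<alpha> + 1) * 2 powr (2 * \<alpha>) * c * real m powr (2 * \<alpha> + 1) / y"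
    using m by (simp add: powr_mult powr_add)
  also have "\<dots> \<le> BK_cell_bound \<alpha> y m"
    using BK_cell_const_ge(5)[OF a] xy ym unfolding BK_cell_bound_def c_def
    by (auto intro!: divide_right_mono mult_right_mono)
  finally show "(2 * x) powr (2 * \<alpha> + 1) * (c * real m / (x * y)) \<le> BK_cell_bound \<alpha> y m" .
  show "BK_mass \<alpha> x y m \<le> ennreal (c * real m / (x * y))"
    unfolding c_def using BK_mass_le_linear[OF a xy(1) _ m] xy by simp
qed (use a N BK_omega_nonneg BK_lin_const_nonneg xy in auto)

text \<open>\<open>BK_window y m N\<close> says that \<open>I\<^sub>N\<close> meets \<open>{x. \<bar>x - y\<bar> < m \<and> m - 1 < x + y}\<close>, the set of
  those \<open>x > 0\<close> for which \<open>\<epsilon>\<^sub>x * \<epsilon>\<^sub>y\<close> can charge \<open>I\<^sub>m\<close>.\<close>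

definition BK_window :: "real \<Rightarrow> nat \<Rightarrow> nat \<Rightarrow> bool" where
  "BK_window y m N \<longleftrightarrow> real N < y + real m + 1 \<and> y - real m < real N \<and> real m - 1 - y < real N"

lemma BK_window_if_mass_ne_0:
  assumes "BK_mass \<alpha> x y m \<noteq> 0" "y > 0" "N \<ge> 1" "real N - 1 \<le> x" "x < real N"
  shows "BK_window y m N"
proof (cases "x = 0")
  case True
  then have "y \<in> {real m - 1..<real m}" "N = 1"
    using assms unfolding BK_mass_def by (auto split: split_indicator_asm)
  then show ?thesis using \<open>y > 0\<close> unfolding BK_window_def by auto
next
  case False
  then have "x > 0" using assms by linarith
  then have "\<bar>x - y\<bar> < real m \<and> real m - 1 < x + y"
    using BK_mass_eq_0[of x y m \<alpha>] assms(1) by blast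
  then show ?thesis using assms unfolding BK_window_def by (auto simp: abs_less_iff)
qed

lemma omega_mass_le_cell_bound:
  assumes a: "\<alpha> \<ge> 1/2" and y: "y > 0" and N: "N \<ge> 1" and m: "m \<ge> 1"
    and x: "real N - 1 \<le> x" "x < real N"
  shows "ennreal (BK_omega \<alpha> N) * BK_mass \<alpha> x y m \<le>
    (if BK_window y m N then ennreal (BK_cell_bound \<alpha> y m) else 0)"
proof (cases "BK_mass \<alpha> x y m = 0")
  case False
  have "ennreal (BK_omega \<alpha> N) * BK_mass \<alpha> x y m \<le> ennreal (BK_cell_bound \<alpha> y m)"
  proof (cases "N = 1")
    case True
    then show ?thesis using omega_mass_le_first_cell[OF a _ y m] x by simp
  next
    case False
    then have x1: "x \<ge> 1" and N2x: "real N \<le> 2 * x" using N x by auto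
    then have "\<bar>x - y\<bar> < real m"
      using BK_mass_eq_0[of x y m \<alpha>] \<open>BK_mass \<alpha> x y m \<noteq> 0\<close> by auto
    then consider "y \<le> 1" | "y > 1" "x \<le> 2 * y" | "y > 1" "2 * y < x" by linarith
    then show ?thesis
    proof cases
      case 1
      show ?thesis
        by (rule omega_mass_le_small_shift[OF a _ y 1 _ N _ m])
          (use x1 x \<open>\<bar>x - y\<bar> < real m\<close> in \<open>auto simp: abs_less_iff\<close>)
    next
      case 2
      then show ?thesis using omega_mass_le_comparable[OF a _ y _ N N2x m] x1 by simp
    next
      case 3
      then show ?thesis using omega_mass_le_far[OF a _ _ _ _ N N2x m] x1 \<open>\<bar>x - y\<bar> < real m\<close> by simp
    qed
  qed
  then show ?thesis using BK_window_if_mass_ne_0[OF False y N x] by simp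
qed simp

lemma card_nat_between_le:
  fixes L U :: real
  assumes "L < U"
  shows "finite {n::nat. L < real n \<and> real n < U}" "real (card {n::nat. L < real n \<and> real n < U}) \<le> U - L + 1"
proof -
  define S where "S = {n::nat. L < real n \<and> real n < U}"
  have sub: "S \<subseteq> {nat (\<lfloor>L\<rfloor> + 1)..<nat \<lceil>U\<rceil>}"
  proof
    fix n assume "n \<in> S"
    then have "L < real n" "real n < U" unfolding S_def by auto
    then have "\<lfloor>L\<rfloor> < int n" "int n < \<lceil>U\<rceil>" by linarith+
    then show "n \<in> {nat (\<lfloor>L\<rfloor> + 1)..<nat \<lceil>U\<rceil>}" by auto
  qed
  then show "finite {n::nat. L < real n \<and> real n < U}" unfolding S_def[symmetric]
    by (rule finite_subset) simp
  have "card S \<le> nat (\<lceil>U\<rceil> - (\<lfloor>L\<rfloor> + 1))" using card_mono[OF _ sub] by simp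
  then have "real (card S) \<le> real (nat (\<lceil>U\<rceil> - (\<lfloor>L\<rfloor> + 1)))" by linarith
  also have "\<dots> \<le> U - L + 1"
  proof -
    have bounds: "real_of_int \<lceil>U\<rceil> < U + 1" "L < real_of_int \<lfloor>L\<rfloor> + 1"
      using ceiling_correct[of U] floor_correct[of L] by linarith+
    show ?thesis
    proof (cases "\<lceil>U\<rceil> \<ge> \<lfloor>L\<rfloor> + 1")
      case True
      then have "real (nat (\<lceil>U\<rceil> - (\<lfloor>L\<rfloor> + 1))) = real_of_int \<lceil>U\<rceil> - real_of_int \<lfloor>L\<rfloor> - 1"
        by simp
      then show ?thesis using bounds by linarith
    qed (use assms in simp)
  qed
  finally show "real (card {n::nat. L < real n \<and> real n < U}) \<le> U - L + 1" unfolding S_def .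
qed

lemma BK_window_card_le:
  assumes "y > 0" "m \<ge> 1"
  shows "finite {n. BK_window y m (Suc n)}"
    and "real (card {n. BK_window y m (Suc n)}) \<le> 5 * max 1 (min y (real m))"
proof -
  define L where "L = max (y - real m - 1) (real m - 2 - y)"
  define U where "U = y + real m"
  have eq: "{n. BK_window y m (Suc n)} = {n::nat. L < real n \<and> real n < U}"
    unfolding BK_window_def L_def U_def by auto
  have LU: "L < U" unfolding L_def U_def using assms by auto
  show "finite {n. BK_window y m (Suc n)}" unfolding eq by (rule card_nat_between_le[OF LU])
  have "real (card {n. BK_window y m (Suc n)}) \<le> U - L + 1"
    unfolding eq by (rule card_nat_between_le[OF LU])
  also have "\<dots> \<le> 5 * max 1 (min y (real m))"
    unfolding L_def U_def using assms by (auto simp: max_def min_def)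
  finally show "real (card {n. BK_window y m (Suc n)}) \<le> 5 * max 1 (min y (real m))" .
qed

definition BK_transl_const :: "real \<Rightarrow> real" where
  "BK_transl_const \<alpha> = 1 + 10 * 2 powr (2 * \<alpha> + 1) * BK_cell_const \<alpha>"

lemma BK_transl_const_ge_1: "\<alpha> \<ge> 1/2 \<Longrightarrow> BK_transl_const \<alpha> \<ge> 1"
  unfolding BK_transl_const_def using BK_cell_const_ge(1)[of \<alpha>] by simp

lemma card_window_mult_cell_bound_le:
  assumes a: "\<alpha> \<ge> 1/2" and y: "y > 0" and m: "m \<ge> 1"
  shows "real (card {n. BK_window y m (Suc n)}) * BK_cell_bound \<alpha> y m \<le> BK_transl_const \<alpha> * BK_omega \<alpha> m"
proof -
  define D where "D = max 1 (min y (real m))"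
  have "real (card {n. BK_window y m (Suc n)}) * BK_cell_bound \<alpha> y m \<le> 5 * D * BK_cell_bound \<alpha> y m"
    using BK_window_card_le[OF y m] BK_cell_bound_nonneg[OF a] unfolding D_def by (intro mult_right_mono) auto
  also have "\<dots> = 5 * BK_cell_const \<alpha> * real m powr (2 * \<alpha> + 1)"
    unfolding BK_cell_bound_def D_def[symmetric] by (simp add: D_def)
  also have "real m powr (2 * \<alpha> + 1) = 2 * 2 powr (2 * \<alpha> + 1) * ((real m / 2) powr (2 * \<alpha> + 1) / 2)"
    by (simp add: powr_divide)
  also have "5 * BK_cell_const \<alpha> * \<dots> \<le> 5 * BK_cell_const \<alpha> * (2 * 2 powr (2 * \<alpha> + 1) * BK_omega \<alpha> m)"
    using BK_omega_ge[OF a m] BK_cell_const_ge(1)[OF a] by (intro mult_left_mono) auto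
  also have "\<dots> \<le> BK_transl_const \<alpha> * BK_omega \<alpha> m"
    using BK_omega_nonneg[OF a m] unfolding BK_transl_const_def by (simp add: algebra_simps)
  finally show ?thesis .
qed

lemma omega_sup_mass_sum_le:
  assumes a: "\<alpha> \<ge> 1/2" and y: "y > 0" and m: "m \<ge> 1"
  shows "(\<Sum>n. ennreal (BK_omega \<alpha> (Suc n)) * (SUP x\<in>{real (Suc n) - 1..<real (Suc n)}. BK_mass \<alpha> x y m))
    \<le> ennreal (BK_transl_const \<alpha> * BK_omega \<alpha> m)"
proof -
  define S where "S = {n. BK_window y m (Suc n)}"
  have "(\<Sum>n. ennreal (BK_omega \<alpha> (Suc n)) * (SUP x\<in>{real (Suc n) - 1..<real (Suc n)}. BK_mass \<alpha> x y m))
      \<le> (\<Sum>n. if n \<in> S then ennreal (BK_cell_bound \<alpha> y m) else 0)"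
  proof (intro suminf_le summableI)
    fix n
    show "ennreal (BK_omega \<alpha> (Suc n)) * (SUP x\<in>{real (Suc n) - 1..<real (Suc n)}. BK_mass \<alpha> x y m)
       \<le> (if n \<in> S then ennreal (BK_cell_bound \<alpha> y m) else 0)"
      unfolding SUP_mult_left_ennreal S_def mem_Collect_eq
      by (rule SUP_least, rule omega_mass_le_cell_bound[OF a y _ m]) auto
  qed
  also have "\<dots> = (\<Sum>n\<in>S. ennreal (BK_cell_bound \<alpha> y m))"
    using BK_window_card_le(1)[OF y m] unfolding S_def[symmetric]
    by (subst suminf_finite[where N = S]) auto
  also have "\<dots> = ennreal (real (card S) * BK_cell_bound \<alpha> y m)"
    by (simp add: ennreal_of_nat_eq_real_of_nat ennreal_mult')
  also have "\<dots> \<le> ennreal (BK_transl_const \<alpha> * BK_omega \<alpha> m)"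
    unfolding S_def by (intro ennreal_leI card_window_mult_cell_bound_le[OF a y m])
  finally show ?thesis .
qed

lemma suminf_commute_ennreal:
  fixes h :: "nat \<Rightarrow> nat \<Rightarrow> ennreal"
  shows "(\<Sum>n. \<Sum>k. h n k) = (\<Sum>k. \<Sum>n. h n k)"
proof -
  have "(\<Sum>n. \<Sum>k. h n k) = (\<integral>\<^sup>+n. (\<Sum>k. h n k) \<partial>count_space UNIV)"
    by (rule nn_integral_count_space_nat[symmetric])
  also have "\<dots> = (\<Sum>k. \<integral>\<^sup>+n. h n k \<partial>count_space UNIV)"
    by (rule nn_integral_suminf) auto
  also have "\<dots> = (\<Sum>k. \<Sum>n. h n k)" by (simp add: nn_integral_count_space_nat)
  finally show ?thesis .
qed

lemma ennreal_le_suminf: "(f :: nat \<Rightarrow> ennreal) k \<le> (\<Sum>n. f n)"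
  using sum_le_suminf[of f "{k}"] by auto

lemma norm_integral_le_nn_integral:
  fixes g :: "'a \<Rightarrow> 'b::{banach, second_countable_topology}"
  shows "ennreal (norm (integral\<^sup>L M g)) \<le> (\<integral>\<^sup>+x. ennreal (norm (g x)) \<partial>M)"
  by (cases "integrable M g") (simp_all add: integral_norm_bound_ennreal not_integrable_integral_eq)

lemma mem_cell_floor: "z \<ge> 0 \<Longrightarrow> z \<in> {real (Suc (nat \<lfloor>z\<rfloor>)) - 1..<real (Suc (nat \<lfloor>z\<rfloor>))}"
  by (auto simp: of_nat_nat) linarith

lemma ennreal_mult_norm_le_cell_sum:
  fixes f :: "real \<Rightarrow> complex"
  assumes "z \<ge> 0" "c \<ge> 0"
  shows "ennreal (c * cmod (f z)) \<le> (\<Sum>k. (SUP t\<in>{real (Suc k) - 1..<real (Suc k)}. ennreal (cmod (f t)))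
    * ennreal (indicator {real (Suc k) - 1..<real (Suc k)} z * c))"
    (is "_ \<le> (\<Sum>k. ?s k * ?g k)")
proof -
  define k where "k = nat \<lfloor>z\<rfloor>"
  have zk: "z \<in> {real (Suc k) - 1..<real (Suc k)}" unfolding k_def using assms by (intro mem_cell_floor)
  have "ennreal (c * cmod (f z)) = ennreal (cmod (f z)) * ennreal c"
    using assms by (simp add: ennreal_mult' mult.commute)
  also have "\<dots> \<le> ?s k * ennreal c"
    using zk by (intro mult_right_mono SUP_upper) auto
  also have "\<dots> = ?s k * ?g k" using zk by simp
  also have "\<dots> \<le> (\<Sum>k. ?s k * ?g k)" by (rule ennreal_le_suminf)
  finally show ?thesis .
qed

lemma BK_transl_norm_le_mass_sum:
  fixes f :: "real \<Rightarrow> complex"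
  assumes a: "\<alpha> \<ge> 1/2" and y: "y > 0" and x: "x \<ge> 0"
  shows "ennreal (cmod (BK_transl \<alpha> y f x)) \<le>
     (\<Sum>k. (SUP t\<in>{real (Suc k) - 1..<real (Suc k)}. ennreal (cmod (f t))) * BK_mass \<alpha> x y (Suc k))"
    (is "_ \<le> (\<Sum>k. ?s k * _)")
proof (cases "x = 0")
  case True
  then show ?thesis
    using ennreal_mult_norm_le_cell_sum[of y 1 f] y unfolding BK_transl_def BK_mass_def by simp
next
  case False
  then have x: "x > 0" using x by simp
  define A where "A = {\<bar>x - y\<bar><..<x + y}"
  define g where "g k z = ennreal (indicator {real (Suc k) - 1..<real (Suc k)} z * (indicator A z * BK_density \<alpha> x y z))"
    for k z
  have g: "g k \<in> borel_measurable lborel" for k unfolding g_def A_def by measurable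
  have "BK_transl \<alpha> y f x = (LINT z|lborel. indicator A z *\<^sub>R (complex_of_real (BK_density \<alpha> x y z) * f z))"
    using x y unfolding BK_transl_def BK_density_def A_def
    by (simp add: interval_lebesgue_integral_le_eq set_lebesgue_integral_def)
  then have "ennreal (cmod (BK_transl \<alpha> y f x))
      \<le> (\<integral>\<^sup>+z. ennreal (norm (indicator A z *\<^sub>R (complex_of_real (BK_density \<alpha> x y z) * f z))) \<partial>lborel)"
    by (simp only: norm_integral_le_nn_integral)
  also have "\<dots> = (\<integral>\<^sup>+z. ennreal (indicator A z * BK_density \<alpha> x y z * cmod (f z)) \<partial>lborel)"
    using BK_density_nonneg[OF a] by (intro nn_integral_cong) (simp add: norm_mult)
  also have "\<dots> \<le> (\<integral>\<^sup>+z. (\<Sum>k. ?s k * g k z) \<partial>lborel)"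
  proof (rule nn_integral_mono)
    fix z
    show "ennreal (indicator A z * BK_density \<alpha> x y z * cmod (f z)) \<le> (\<Sum>k. ?s k * g k z)"
    proof (cases "z \<in> A")
      case True
      then have "z \<ge> 0" unfolding A_def using abs_ge_zero[of "x - y"] by auto
      then show ?thesis unfolding g_def
        using ennreal_mult_norm_le_cell_sum[of z "indicator A z * BK_density \<alpha> x y z" f]
          True BK_density_nonneg[OF a] by simp
    qed simp
  qed
  also have "\<dots> = (\<Sum>k. \<integral>\<^sup>+z. ?s k * g k z \<partial>lborel)"
    using g by (intro nn_integral_suminf) auto
  also have "\<dots> = (\<Sum>k. ?s k * BK_mass \<alpha> x y (Suc k))"
    using g x by (simp add: nn_integral_cmult BK_mass_def g_def A_def Int_commute indicator_inter_arith mult.assoc)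
  finally show ?thesis .
qed

lemma BK_norm_BK_transl_le:
  fixes f :: "real \<Rightarrow> complex"
  assumes a: "\<alpha> \<ge> 1/2" and y: "y > 0"
  shows "BK_norm \<alpha> (BK_transl \<alpha> y f) \<le> ennreal (BK_transl_const \<alpha>) * BK_norm \<alpha> f"
proof -
  define I where "I n = {real (Suc n) - 1..<real (Suc n)}" for n
  define s where "s k = (SUP t\<in>I k. ennreal (cmod (f t)))" for k
  define w where "w n = ennreal (BK_omega \<alpha> (Suc n))" for n
  define G where "G n k = (SUP x\<in>I n. BK_mass \<alpha> x y (Suc k))" for n k
  have cell: "(SUP x\<in>I n. ennreal (cmod (BK_transl \<alpha> y f x))) \<le> (\<Sum>k. s k * G n k)" for n
  proof (rule SUP_least)
    fix x assume x: "x \<in> I n"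
    then have "ennreal (cmod (BK_transl \<alpha> y f x)) \<le> (\<Sum>k. s k * BK_mass \<alpha> x y (Suc k))"
      unfolding s_def I_def by (intro BK_transl_norm_le_mass_sum[OF a y]) auto
    also have "\<dots> \<le> (\<Sum>k. s k * G n k)"
      unfolding G_def using x by (intro suminf_le summableI mult_left_mono SUP_upper) auto
    finally show "ennreal (cmod (BK_transl \<alpha> y f x)) \<le> (\<Sum>k. s k * G n k)" .
  qed
  have "BK_norm \<alpha> (BK_transl \<alpha> y f) = (\<Sum>n. w n * (SUP x\<in>I n. ennreal (cmod (BK_transl \<alpha> y f x))))"
    unfolding BK_norm_def w_def I_def ..
  also have "\<dots> \<le> (\<Sum>n. w n * (\<Sum>k. s k * G n k))"
    using cell by (intro suminf_le summableI mult_left_mono) auto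
  also have "\<dots> = (\<Sum>n. \<Sum>k. s k * (w n * G n k))"
    by (simp add: ennreal_suminf_cmult[symmetric] mult.left_commute)
  also have "\<dots> = (\<Sum>k. \<Sum>n. s k * (w n * G n k))"
    by (rule suminf_commute_ennreal)
  also have "\<dots> = (\<Sum>k. s k * (\<Sum>n. w n * G n k))"
    by (simp add: ennreal_suminf_cmult)
  also have "\<dots> \<le> (\<Sum>k. s k * ennreal (BK_transl_const \<alpha> * BK_omega \<alpha> (Suc k)))"
    unfolding w_def G_def I_def
    by (intro suminf_le summableI mult_left_mono omega_sup_mass_sum_le[OF a y]) auto
  also have "\<dots> = ennreal (BK_transl_const \<alpha>) * BK_norm \<alpha> f"
    using BK_transl_const_ge_1[OF a] unfolding BK_norm_def s_def I_def
    by (simp add: ennreal_mult' mult_ac flip: ennreal_suminf_cmult)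
  finally show ?thesis .
qed

theorem mainTheorem5:
  fixes \<alpha> :: real
  assumes "\<alpha> \<ge> 1/2"
  shows "\<exists>C>0. \<forall>f y. f \<in> borel_measurable lebesgue \<and> BK_norm \<alpha> f < \<infinity> \<and> y \<ge> 0 \<longrightarrow>
           BK_norm \<alpha> (BK_transl \<alpha> y f) \<le> ennreal C * BK_norm \<alpha> f"
proof (intro exI[of _ "BK_transl_const \<alpha>"] conjI allI impI)
  show "BK_transl_const \<alpha> > 0" using BK_transl_const_ge_1[OF assms] by simp
  fix f :: "real \<Rightarrow> complex" and y :: real
  assume "f \<in> borel_measurable lebesgue \<and> BK_norm \<alpha> f < \<infinity> \<and> y \<ge> 0"
  then consider "y = 0" | "y > 0" by linarith
  then show "BK_norm \<alpha> (BK_transl \<alpha> y f) \<le> ennreal (BK_transl_const \<alpha>) * BK_norm \<alpha> f"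
  proof cases
    case 1
    then have "BK_transl \<alpha> y f = f" unfolding BK_transl_def by (auto simp: fun_eq_iff)
    then show ?thesis
      using BK_transl_const_ge_1[OF assms] mult_right_mono[of 1 "ennreal (BK_transl_const \<alpha>)" "BK_norm \<alpha> f"]
      by simp
  qed (rule BK_norm_BK_transl_le[OF assms])
qed

end
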